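(* Let $\mathfrak G$ be a Grassmann semialgebra over a commutative semiring $\mathcal A$ and an $\mathcal A$-module $V$. For any finitely many $\alpha_i\in\mathcal A$ and $a_i\in V$, $$\Bigl(\sum_i\alpha_ia_i\Bigr)^2\succeq_\circ\sum_i\alpha_i^2a_i^2 .$$
   Context: A Grassmann (exterior) semialgebra over $\mathcal A$ and $V$ is an associative $\mathcal A$-semialgebra $\mathfrak G$ (product written $\wedge$, $x^2=x\wedge x$) generated by $\mathcal A$ and $V$; $\mathfrak G_{\ge2}$ is the submodule generated by products of at least two elements of $V$; it carries a negation map $(-)$ on $\mathfrak G_{\ge2}$ (an additive bijection of order $\le2$ commuting with scalars) with $v_1\wedge v_2=(-)(v_2\wedge v_1)$ for all $v_1,v_2\in V$. A quasi-zero is an element $a+((-)a)$, and $a_1\succeq_\circ a_0$ means $a_1=a_0+d$ with $d$ a quasi-zero. *)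

theory Defs
  imports Main
begin

text \<open>Setting: the commutative semiring \<A> is a type 'a :: comm_semiring_1; the Grassmann
semialgebra \<G> is a type 'g carrying an associative semiring structure with unit
(class {semiring_0, monoid_mult}); the \<A>-action is a function sm; V is a subset of \<G>;
the negation map neg is a function that is only constrained on \<G>_{\<ge>2}.\<close>

inductive_set prods_ge2 :: "'g::{semiring_0,monoid_mult} set \<Rightarrow> 'g set" for V where
  two: "v \<in> V \<Longrightarrow> w \<in> V \<Longrightarrow> v * w \<in> prods_ge2 V"
| more: "v \<in> V \<Longrightarrow> p \<in> prods_ge2 V \<Longrightarrow> v * p \<in> prods_ge2 V"

inductive_set G_ge2 :: "('a \<Rightarrow> 'g \<Rightarrow> 'g) \<Rightarrow> 'g::{semiring_0,monoid_mult} set \<Rightarrow> 'g set"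
  for sm V where
  zero: "0 \<in> G_ge2 sm V"
| prod: "p \<in> prods_ge2 V \<Longrightarrow> p \<in> G_ge2 sm V"
| add: "x \<in> G_ge2 sm V \<Longrightarrow> y \<in> G_ge2 sm V \<Longrightarrow> x + y \<in> G_ge2 sm V"
| smul: "x \<in> G_ge2 sm V \<Longrightarrow> sm c x \<in> G_ge2 sm V"

inductive_set gen_alg :: "('a \<Rightarrow> 'g \<Rightarrow> 'g) \<Rightarrow> 'g::{semiring_0,monoid_mult} set \<Rightarrow> 'g set"
  for sm V where
  scal: "sm c 1 \<in> gen_alg sm V"
| vec: "v \<in> V \<Longrightarrow> v \<in> gen_alg sm V"
| add: "x \<in> gen_alg sm V \<Longrightarrow> y \<in> gen_alg sm V \<Longrightarrow> x + y \<in> gen_alg sm V"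
| mult: "x \<in> gen_alg sm V \<Longrightarrow> y \<in> gen_alg sm V \<Longrightarrow> x * y \<in> gen_alg sm V"
| smul: "x \<in> gen_alg sm V \<Longrightarrow> sm c x \<in> gen_alg sm V"

definition grassmann_semialgebra ::
  "('a::comm_semiring_1 \<Rightarrow> 'g \<Rightarrow> 'g) \<Rightarrow> 'g::{semiring_0,monoid_mult} set \<Rightarrow> ('g \<Rightarrow> 'g) \<Rightarrow> bool"
  where "grassmann_semialgebra sm V neg \<longleftrightarrow>
    \<comment> \<open>\<G> is an \<A>-module\<close>
    (\<forall>a b x. sm (a * b) x = sm a (sm b x)) \<and>
    (\<forall>a b x. sm (a + b) x = sm a x + sm b x) \<and>
    (\<forall>a x y. sm a (x + y) = sm a x + sm a y) \<and>
    (\<forall>x. sm 1 x = x) \<and> (\<forall>x. sm 0 x = 0) \<and> (\<forall>a. sm a 0 = 0) \<and>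
    \<comment> \<open>\<A>-semialgebra: scalars commute with the product\<close>
    (\<forall>a x y. sm a (x * y) = sm a x * y \<and> sm a (x * y) = x * sm a y) \<and>
    \<comment> \<open>V is an \<A>-submodule\<close>
    0 \<in> V \<and> (\<forall>v\<in>V. \<forall>w\<in>V. v + w \<in> V) \<and> (\<forall>a. \<forall>v\<in>V. sm a v \<in> V) \<and>
    \<comment> \<open>\<G> is generated by \<A> and V\<close>
    gen_alg sm V = UNIV \<and>
    \<comment> \<open>negation map on \<G>_{\<ge>2}\<close>
    (\<forall>x\<in>G_ge2 sm V. neg x \<in> G_ge2 sm V) \<and>
    bij_betw neg (G_ge2 sm V) (G_ge2 sm V) \<and>
    (\<forall>x\<in>G_ge2 sm V. \<forall>y\<in>G_ge2 sm V. neg (x + y) = neg x + neg y) \<and>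
    (\<forall>x\<in>G_ge2 sm V. neg (neg x) = x) \<and>
    (\<forall>a. \<forall>x\<in>G_ge2 sm V. neg (sm a x) = sm a (neg x)) \<and>
    (\<forall>v1\<in>V. \<forall>v2\<in>V. v1 * v2 = neg (v2 * v1))"

definition quasi_zero :: "('a \<Rightarrow> 'g \<Rightarrow> 'g) \<Rightarrow> 'g::{semiring_0,monoid_mult} set \<Rightarrow> ('g \<Rightarrow> 'g) \<Rightarrow> 'g \<Rightarrow> bool"
  where "quasi_zero sm V neg d \<longleftrightarrow> (\<exists>a\<in>G_ge2 sm V. d = a + neg a)"

definition succeq_circ :: "('a \<Rightarrow> 'g \<Rightarrow> 'g) \<Rightarrow> 'g::{semiring_0,monoid_mult} set \<Rightarrow> ('g \<Rightarrow> 'g) \<Rightarrow> 'g \<Rightarrow> 'g \<Rightarrow> bool"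
  where "succeq_circ sm V neg a1 a0 \<longleftrightarrow> (\<exists>d. quasi_zero sm V neg d \<and> a1 = a0 + d)"

end

theory Submission
  imports Defs
begin

text \<open>Expanding the square of a sum of vectors, every cross term comes in a pair
  \<open>v * w + w * v\<close>, and anticommutativity turns such a pair into the quasi-zero
  \<open>v * w + (-)(v * w)\<close>. Since quasi-zeros are closed under addition, the relation
  \<open>\<succeq>\<^sub>\<circ>\<close> is compatible with sums and the claim follows by induction on the
  number of summands; scalars are pulled out of the squares because they commute
  with the product.\<close>

locale grassmann =
  fixes sm :: "'a::comm_semiring_1 \<Rightarrow> 'g::{semiring_0,monoid_mult} \<Rightarrow> 'g"
    and V :: "'g set" and neg :: "'g \<Rightarrow> 'g"
  assumes grassmann_semialgebra: "grassmann_semialgebra sm V neg"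
begin

lemma smul_mult: "sm (c * b) x = sm c (sm b x)"
  using grassmann_semialgebra unfolding grassmann_semialgebra_def by (elim conjE) metis

lemma smul_zero_left: "sm 0 x = 0"
  using grassmann_semialgebra unfolding grassmann_semialgebra_def by (elim conjE) metis

lemma smul_times_left: "sm c (x * y) = sm c x * y"
  using grassmann_semialgebra unfolding grassmann_semialgebra_def by (elim conjE) metis

lemma smul_times_right: "sm c (x * y) = x * sm c y"
  using grassmann_semialgebra unfolding grassmann_semialgebra_def by (elim conjE) metis

lemma zero_in_V: "0 \<in> V"
  using grassmann_semialgebra unfolding grassmann_semialgebra_def by (elim conjE) metis

lemma add_in_V: "v \<in> V \<Longrightarrow> w \<in> V \<Longrightarrow> v + w \<in> V"
  using grassmann_semialgebra unfolding grassmann_semialgebra_def by (elim conjE) metis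

lemma smul_in_V: "v \<in> V \<Longrightarrow> sm c v \<in> V"
  using grassmann_semialgebra unfolding grassmann_semialgebra_def by (elim conjE) metis

lemma neg_add: "x \<in> G_ge2 sm V \<Longrightarrow> y \<in> G_ge2 sm V \<Longrightarrow> neg (x + y) = neg x + neg y"
  using grassmann_semialgebra unfolding grassmann_semialgebra_def by (elim conjE) metis

lemma neg_smul: "x \<in> G_ge2 sm V \<Longrightarrow> neg (sm c x) = sm c (neg x)"
  using grassmann_semialgebra unfolding grassmann_semialgebra_def by (elim conjE) metis

lemma anticommute: "v \<in> V \<Longrightarrow> w \<in> V \<Longrightarrow> w * v = neg (v * w)"
  using grassmann_semialgebra unfolding grassmann_semialgebra_def by (elim conjE) metis

lemma neg_zero: "neg 0 = 0"
  using neg_smul[OF G_ge2.zero, of 0] by (simp add: smul_zero_left)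

lemma smul_power2: "sm c x ^ 2 = sm (c ^ 2) (x ^ 2)"
proof -
  have "sm c x * sm c x = sm c (x * sm c x)"
    by (rule smul_times_left[symmetric])
  also have "\<dots> = sm c (sm c (x * x))"
    by (simp only: smul_times_right)
  finally show ?thesis
    by (simp only: power2_eq_square smul_mult)
qed

lemma sum_in_V: "(\<And>i. i \<in> I \<Longrightarrow> f i \<in> V) \<Longrightarrow> sum f I \<in> V"
  by (induction I rule: infinite_finite_induct) (auto simp: zero_in_V add_in_V)

lemma quasi_zero_zero: "quasi_zero sm V neg 0"
  unfolding quasi_zero_def using G_ge2.zero neg_zero by force

lemma quasi_zero_add:
  assumes "quasi_zero sm V neg d" and "quasi_zero sm V neg e"
  shows "quasi_zero sm V neg (d + e)"
proof -
  obtain x y where x: "x \<in> G_ge2 sm V" "d = x + neg x" and y: "y \<in> G_ge2 sm V" "e = y + neg y"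
    using assms unfolding quasi_zero_def by blast
  then have "d + e = (x + y) + neg (x + y)"
    by (simp add: neg_add algebra_simps)
  with x y show ?thesis
    unfolding quasi_zero_def by (blast intro: G_ge2.add)
qed

lemma quasi_zero_cross_terms:
  assumes "v \<in> V" and "w \<in> V"
  shows "quasi_zero sm V neg (v * w + w * v)"
  unfolding quasi_zero_def anticommute[OF assms]
  using assms by (blast intro: G_ge2.prod prods_ge2.two)

lemma succeq_circ_refl: "succeq_circ sm V neg x x"
  unfolding succeq_circ_def using quasi_zero_zero by force

lemma succeq_circ_add:
  "succeq_circ sm V neg x x' \<Longrightarrow> succeq_circ sm V neg y y' \<Longrightarrow>
    succeq_circ sm V neg (x + y) (x' + y')"
  unfolding succeq_circ_def
  by (elim exE conjE, rule exI[where x = "_ + _"], rule conjI, erule (1) quasi_zero_add)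
     (simp add: algebra_simps)

lemma succeq_circ_trans:
  "succeq_circ sm V neg x y \<Longrightarrow> succeq_circ sm V neg y z \<Longrightarrow> succeq_circ sm V neg x z"
  unfolding succeq_circ_def
  by (elim exE conjE, rule exI[where x = "_ + _"], rule conjI, erule (1) quasi_zero_add)
     (simp add: algebra_simps)

lemma power2_add_succeq_circ:
  assumes "v \<in> V" and "w \<in> V"
  shows "succeq_circ sm V neg ((v + w) ^ 2) (v ^ 2 + w ^ 2)"
proof -
  have "(v + w) ^ 2 = v ^ 2 + w ^ 2 + (v * w + w * v)"
    by (simp add: power2_eq_square algebra_simps)
  with quasi_zero_cross_terms[OF assms] show ?thesis
    unfolding succeq_circ_def by blast
qed

lemma power2_sum_succeq_circ:
  assumes "finite I" and "\<And>i. i \<in> I \<Longrightarrow> f i \<in> V"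
  shows "succeq_circ sm V neg ((\<Sum>i\<in>I. f i) ^ 2) (\<Sum>i\<in>I. f i ^ 2)"
  using assms
proof (induction I rule: finite_induct)
  case empty
  show ?case by (simp add: power2_eq_square succeq_circ_refl)
next
  case (insert k F)
  have "succeq_circ sm V neg ((f k + sum f F) ^ 2) (f k ^ 2 + sum f F ^ 2)"
    using insert.prems by (intro power2_add_succeq_circ sum_in_V) auto
  moreover have "succeq_circ sm V neg (f k ^ 2 + sum f F ^ 2) (f k ^ 2 + (\<Sum>i\<in>F. f i ^ 2))"
    using insert by (intro succeq_circ_add succeq_circ_refl) auto
  ultimately show ?case
    using insert.hyps by (simp add: succeq_circ_trans)
qed

end

theorem mainTheorem8:
  fixes sm :: "'a::comm_semiring_1 \<Rightarrow> 'g::{semiring_0,monoid_mult} \<Rightarrow> 'g"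
    and V :: "'g set" and neg :: "'g \<Rightarrow> 'g"
    and I :: "'i set" and \<alpha> :: "'i \<Rightarrow> 'a" and a :: "'i \<Rightarrow> 'g"
  assumes "grassmann_semialgebra sm V neg"
    and "finite I"
    and "\<forall>i\<in>I. a i \<in> V"
  shows "succeq_circ sm V neg ((\<Sum>i\<in>I. sm (\<alpha> i) (a i)) ^ 2) (\<Sum>i\<in>I. sm ((\<alpha> i) ^ 2) ((a i) ^ 2))"
proof -
  interpret grassmann sm V neg by (rule grassmann.intro) (fact assms(1))
  have "\<And>i. i \<in> I \<Longrightarrow> sm (\<alpha> i) (a i) \<in> V"
    using assms(3) by (blast intro: smul_in_V)
  then have "succeq_circ sm V neg ((\<Sum>i\<in>I. sm (\<alpha> i) (a i)) ^ 2) (\<Sum>i\<in>I. sm (\<alpha> i) (a i) ^ 2)"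
    using assms(2) by (rule power2_sum_succeq_circ[rotated])
  then show ?thesis
    by (simp only: smul_power2)
qed

end
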